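(* Let $\lambda>0$, $\eta>0$ and $t>0$ be given. Then $$\big\||t\xi^2|^{\lambda}e^{\eta(|\xi|-\xi^2)t}\big\|_{L^\infty_\xi(\mathbb{R})}\le C_\lambda f_\lambda(t),\qquad f_\lambda(t)=\big(t^\lambda+\eta^{-\lambda}\big)\,e^{\frac{\eta}{8}\left(t+t^{1/2}\sqrt{t+\frac{16\lambda}{\eta}}\right)},$$ where $C_\lambda>0$ depends only on $\lambda$, and $f_\lambda$ is a nondecreasing function on $(0,\infty)$. *)

theory Defs
  imports "HOL-Analysis.Analysis"
begin

definition f_lam :: "real \<Rightarrow> real \<Rightarrow> real \<Rightarrow> real" where
  "f_lam \<eta> lam t = (t powr lam + \<eta> powr (-lam)) *
     exp ((\<eta> / 8) * (t + sqrt t * sqrt (t + 16 * lam / \<eta>)))"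

end

theory Submission
  imports Defs
begin

text \<open>Write x for the modulus of the frequency. For x at most 2 the exponent
  eta (x - x^2) t is at most eta t / 4 and (t x^2)^lam is at most 4^lam t^lam; this is dominated
  by the first summand of f_lam, whose exponential factor is at least exp (eta t / 4).
  For x at least 2 the exponent is at most -y with y = eta t x^2 / 2, and y^lam exp (-y) is bounded
  by a constant depending only on lam, which leaves (2 lam)^lam eta^(-lam), the second summand.\<close>

lemma powr_mult_exp_neg_le:
  fixes y lam :: real
  assumes "lam > 0" "y \<ge> 0"
  shows "y powr lam * exp (- y) \<le> lam powr lam"
proof -
  have "y \<le> lam * exp (y / lam)"
    using exp_ge_add_one_self[of "y / lam"] assms by (simp add: field_simps)
  hence "y powr lam \<le> (lam * exp (y / lam)) powr lam"
    using assms by (intro powr_mono2) auto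
  also have "\<dots> = lam powr lam * exp y"
    using assms by (simp add: powr_mult exp_powr_real)
  finally show ?thesis
    by (simp add: exp_minus field_simps)
qed

lemma weight_le_near_origin:
  fixes \<eta> t x lam :: real
  assumes "\<eta> \<ge> 0" "t > 0" "lam \<ge> 0" "0 \<le> x" "x \<le> 2"
  shows "(t * x\<^sup>2) powr lam * exp (\<eta> * (x - x\<^sup>2) * t) \<le> 4 powr lam * (t powr lam * exp (\<eta> * t / 4))"
proof -
  have "x\<^sup>2 \<le> 2\<^sup>2"
    using assms by (intro power_mono) auto
  hence "(t * x\<^sup>2) powr lam \<le> (4 * t) powr lam"
    using assms by (intro powr_mono2) auto
  moreover have "x - x\<^sup>2 \<le> 1 / 4"
    using zero_le_power2[of "x - 1 / 2"] by (simp add: power2_eq_square algebra_simps)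
  hence "\<eta> * t * (x - x\<^sup>2) \<le> \<eta> * t * (1 / 4)"
    using assms by (intro mult_left_mono) auto
  hence "exp (\<eta> * (x - x\<^sup>2) * t) \<le> exp (\<eta> * t / 4)"
    by (simp add: mult_ac)
  ultimately have "(t * x\<^sup>2) powr lam * exp (\<eta> * (x - x\<^sup>2) * t) \<le> (4 * t) powr lam * exp (\<eta> * t / 4)"
    by (intro mult_mono) auto
  also have "\<dots> = 4 powr lam * (t powr lam * exp (\<eta> * t / 4))"
    using assms by (simp add: powr_mult)
  finally show ?thesis .
qed

lemma weight_le_away_from_origin:
  fixes \<eta> t x lam :: real
  assumes "\<eta> > 0" "t > 0" "lam > 0" "x \<ge> 2"
  shows "(t * x\<^sup>2) powr lam * exp (\<eta> * (x - x\<^sup>2) * t) \<le> (2 * lam) powr lam * \<eta> powr (- lam)"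
proof -
  define y where "y = \<eta> * t * x\<^sup>2 / 2"
  have "x * (x - 2) \<ge> 0"
    using assms by simp
  hence "x - x\<^sup>2 \<le> - (x\<^sup>2 / 2)"
    by (simp add: algebra_simps power2_eq_square)
  hence "\<eta> * t * (x - x\<^sup>2) \<le> \<eta> * t * (- (x\<^sup>2 / 2))"
    using assms by (intro mult_left_mono) auto
  hence "exp (\<eta> * (x - x\<^sup>2) * t) \<le> exp (- y)"
    unfolding y_def by (simp add: mult_ac)
  moreover have "(t * x\<^sup>2) powr lam = (2 / \<eta>) powr lam * y powr lam"
    using assms unfolding y_def by (simp add: powr_mult[symmetric])
  ultimately have "(t * x\<^sup>2) powr lam * exp (\<eta> * (x - x\<^sup>2) * t) \<le> (2 / \<eta>) powr lam * (y powr lam * exp (- y))"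
    by (simp add: mult_left_mono mult.assoc)
  also have "\<dots> \<le> (2 / \<eta>) powr lam * lam powr lam"
    using assms powr_mult_exp_neg_le[of lam y] unfolding y_def by (intro mult_left_mono) auto
  also have "\<dots> = (2 * lam) powr lam * \<eta> powr (- lam)"
    using assms by (simp add: powr_divide powr_mult powr_minus_divide)
  finally show ?thesis .
qed

lemma f_lam_ge:
  fixes \<eta> t lam :: real
  assumes "\<eta> > 0" "t > 0" "lam > 0"
  shows "t powr lam * exp (\<eta> * t / 4) \<le> f_lam \<eta> lam t"
    and "\<eta> powr (- lam) \<le> f_lam \<eta> lam t"
proof -
  let ?E = "exp ((\<eta> / 8) * (t + sqrt t * sqrt (t + 16 * lam / \<eta>)))"
  have "sqrt t * sqrt t \<le> sqrt t * sqrt (t + 16 * lam / \<eta>)"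
    using assms by (intro mult_left_mono) auto
  hence "t \<le> sqrt t * sqrt (t + 16 * lam / \<eta>)"
    using assms by simp
  hence E: "exp (\<eta> * t / 4) \<le> ?E" "1 \<le> ?E"
    using assms by (simp_all add: field_simps)
  show "t powr lam * exp (\<eta> * t / 4) \<le> f_lam \<eta> lam t"
    unfolding f_lam_def using E by (intro mult_mono) auto
  have "\<eta> powr (- lam) * 1 \<le> (t powr lam + \<eta> powr (- lam)) * ?E"
    using E by (intro mult_mono) auto
  thus "\<eta> powr (- lam) \<le> f_lam \<eta> lam t"
    unfolding f_lam_def by simp
qed

lemma mono_on_f_lam:
  fixes \<eta> lam :: real
  assumes "\<eta> > 0" "lam > 0"
  shows "mono_on {0<..} (f_lam \<eta> lam)"
proof (rule mono_onI)
  fix r s :: real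
  assume "r \<in> {0<..}" "s \<in> {0<..}" "r \<le> s"
  moreover have "0 \<le> 16 * lam / \<eta>"
    using assms by simp
  ultimately have "sqrt r * sqrt (r + 16 * lam / \<eta>) \<le> sqrt s * sqrt (s + 16 * lam / \<eta>)"
    by (intro mult_mono) auto
  hence "exp ((\<eta> / 8) * (r + sqrt r * sqrt (r + 16 * lam / \<eta>)))
      \<le> exp ((\<eta> / 8) * (s + sqrt s * sqrt (s + 16 * lam / \<eta>)))"
    using \<open>r \<le> s\<close> assms by (simp add: mult_left_mono)
  moreover have "r powr lam \<le> s powr lam"
    using \<open>r \<in> {0<..}\<close> \<open>r \<le> s\<close> assms by (simp add: powr_mono2)
  ultimately show "f_lam \<eta> lam r \<le> f_lam \<eta> lam s"
    unfolding f_lam_def by (intro mult_mono) auto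
qed

theorem lemma2p2:
  fixes lam :: real
  assumes "lam > 0"
  shows "\<exists>C>0. (\<forall>\<eta>>0. \<forall>t>0. \<forall>\<xi>::real.
            \<bar>t * \<xi>\<^sup>2\<bar> powr lam * exp (\<eta> * (\<bar>\<xi>\<bar> - \<xi>\<^sup>2) * t) \<le> C * f_lam \<eta> lam t)
         \<and> (\<forall>\<eta>>0. mono_on {0<..} (f_lam \<eta> lam))"
proof (intro exI[of _ "4 powr lam + (2 * lam) powr lam"] conjI allI impI)
  show "0 < 4 powr lam + (2 * lam) powr lam"
    using assms by (simp add: add_pos_nonneg)
next
  fix \<eta> t \<xi> :: real
  assume "\<eta> > 0" "t > 0"
  let ?C = "4 powr lam + (2 * lam) powr lam"
  have "0 \<le> f_lam \<eta> lam t"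
    using f_lam_ge(2)[OF \<open>\<eta> > 0\<close> \<open>t > 0\<close> assms] powr_ge_zero[of \<eta> "- lam"] by linarith
  have "\<bar>t * \<xi>\<^sup>2\<bar> powr lam * exp (\<eta> * (\<bar>\<xi>\<bar> - \<xi>\<^sup>2) * t)
      = (t * \<bar>\<xi>\<bar>\<^sup>2) powr lam * exp (\<eta> * (\<bar>\<xi>\<bar> - \<bar>\<xi>\<bar>\<^sup>2) * t)"
    using \<open>t > 0\<close> by simp
  also have "\<dots> \<le> ?C * f_lam \<eta> lam t"
  proof (cases "\<bar>\<xi>\<bar> \<le> 2")
    case True
    have "(t * \<bar>\<xi>\<bar>\<^sup>2) powr lam * exp (\<eta> * (\<bar>\<xi>\<bar> - \<bar>\<xi>\<bar>\<^sup>2) * t)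
        \<le> 4 powr lam * (t powr lam * exp (\<eta> * t / 4))"
      using True \<open>\<eta> > 0\<close> \<open>t > 0\<close> assms by (intro weight_le_near_origin) auto
    also have "\<dots> \<le> 4 powr lam * f_lam \<eta> lam t"
      using f_lam_ge(1)[OF \<open>\<eta> > 0\<close> \<open>t > 0\<close> assms] by (intro mult_left_mono) auto
    also have "\<dots> \<le> ?C * f_lam \<eta> lam t"
      using \<open>0 \<le> f_lam \<eta> lam t\<close> by (intro mult_right_mono) auto
    finally show ?thesis .
  next
    case False
    have "(t * \<bar>\<xi>\<bar>\<^sup>2) powr lam * exp (\<eta> * (\<bar>\<xi>\<bar> - \<bar>\<xi>\<bar>\<^sup>2) * t)
        \<le> (2 * lam) powr lam * \<eta> powr (- lam)"
      using False \<open>\<eta> > 0\<close> \<open>t > 0\<close> assms by (intro weight_le_away_from_origin) auto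
    also have "\<dots> \<le> (2 * lam) powr lam * f_lam \<eta> lam t"
      using f_lam_ge(2)[OF \<open>\<eta> > 0\<close> \<open>t > 0\<close> assms] by (intro mult_left_mono) auto
    also have "\<dots> \<le> ?C * f_lam \<eta> lam t"
      using \<open>0 \<le> f_lam \<eta> lam t\<close> by (intro mult_right_mono) auto
    finally show ?thesis .
  qed
  finally show "\<bar>t * \<xi>\<^sup>2\<bar> powr lam * exp (\<eta> * (\<bar>\<xi>\<bar> - \<xi>\<^sup>2) * t) \<le> ?C * f_lam \<eta> lam t" .
next
  fix \<eta> :: real
  assume "\<eta> > 0"
  then show "mono_on {0<..} (f_lam \<eta> lam)"
    using mono_on_f_lam assms by blast
qed

end
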